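(* Let $m_{\max}$ be the maximum covering number of the compact query space $\mathcal{X}$ at radius $\epsilon$, so $m_{\max}\le(D\sqrt{d_e}/\epsilon)^{d_e}$ with $D$ the diameter. The total number of cache switches triggered by CLCB-SC-LS-Cont up to horizon $T$ satisfies $$\mathbb{E}\Big[\sum_{u\in\mathcal{S}_T}\tau_u(T)\Big]\le\mathcal{O}(m_{\max}\log\log T),\qquad\mathbb{E}[\tau_f(T)]\le\mathcal{O}(\log\log T).$$
   Context: CLCB-SC-LS-Cont (radius $\epsilon$, horizon $T$) maintains a growing set of centers $\mathcal{S}_t\subset\mathcal{X}\subset\mathbb{R}^{d_e}$: an arriving query farther than $\epsilon$ from all centers becomes a new center, otherwise it is mapped to its nearest center; $m_t=|\mathcal{S}_t|$. Each center $u$ has a local stage index $\tau_u$ (starting at 1); $\mathcal{T}(u,\tau)$ is the set of rounds in stage $\tau$ of $u$ at which the LLM was queried on a query mapped to $u$; stage $\tau_u$ ends and $\tau_u$ increases by one when $|\mathcal{T}(u,\tau_u)|\ge1+\sqrt{\frac{T}{m_t}\sum_{\tau<\tau_u}|\mathcal{T}(u,\tau)|}$. A global stage index $\tau_f$ with sets $\mathcal{T}(f,\tau)$ of all arrival rounds in stage $\tau$ increases when $|\mathcal{T}(f,\tau_f)|\ge1+\sqrt{T\sum_{\tau<\tau_f}|\mathcal{T}(f,\tau)|}$. Cache switches occur exactly at stage increments (and at center creations). $\tau_u(T),\tau_f(T)$ are the stage indices at time $T$. *)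

theory Defs
  imports "HOL-Probability.Probability"
begin

text \<open>Queries live in R^d, represented as functions nat => real vanishing from index d on
  (the product topology on nat => real restricts to the Euclidean topology there).\<close>

definition edist :: "nat \<Rightarrow> (nat \<Rightarrow> real) \<Rightarrow> (nat \<Rightarrow> real) \<Rightarrow> real" where
  "edist d x y = sqrt (\<Sum>i<d. (x i - y i)^2)"

text \<open>Maximal number of centers the greedy epsilon-net procedure can create in X:
  the maximal cardinality of a subset of X whose points are pairwise more than epsilon apart.\<close>
definition mmax :: "nat \<Rightarrow> (nat \<Rightarrow> real) set \<Rightarrow> real \<Rightarrow> nat" where
  "mmax d X \<epsilon> = Sup {card S | S. finite S \<and> S \<subseteq> X \<and>
       (\<forall>x\<in>S. \<forall>y\<in>S. x \<noteq> y \<longrightarrow> edist d x y > \<epsilon>)}"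

record cstate =
  cs :: "(nat \<Rightarrow> real) list"   \<comment> \<open>centers in order of creation\<close>
  tu :: "nat list"                \<comment> \<open>local stage index of each center\<close>
  cu :: "nat list"                \<comment> \<open>size of current local stage set T(u,tau_u)\<close>
  su :: "nat list"                \<comment> \<open>sum of sizes of previous local stages\<close>
  tf :: nat                       \<comment> \<open>global stage index\<close>
  cf :: nat                       \<comment> \<open>size of current global stage set\<close>
  sf :: nat                       \<comment> \<open>sum of sizes of previous global stages\<close>

definition init_state :: cstate where
  "init_state = \<lparr>cs = [], tu = [], cu = [], su = [], tf = 1, cf = 0, sf = 0\<rparr>"

definition is_new :: "nat \<Rightarrow> real \<Rightarrow> (nat \<Rightarrow> real) list \<Rightarrow> (nat \<Rightarrow> real) \<Rightarrow> bool" where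
  "is_new d \<epsilon> C x = (\<forall>c\<in>set C. edist d x c > \<epsilon>)"

definition nearest :: "nat \<Rightarrow> (nat \<Rightarrow> real) list \<Rightarrow> (nat \<Rightarrow> real) \<Rightarrow> nat" where
  "nearest d C x = (LEAST i. i < length C \<and> (\<forall>j<length C. edist d x (C!i) \<le> edist d x (C!j)))"

definition add_center :: "(nat \<Rightarrow> real) \<Rightarrow> cstate \<Rightarrow> cstate" where
  "add_center x st = st\<lparr>cs := cs st @ [x], tu := tu st @ [1], cu := cu st @ [0], su := su st @ [0]\<rparr>"

text \<open>LLM queried on a query mapped to center number i (m_t = current number of centers).\<close>
definition local_upd :: "nat \<Rightarrow> nat \<Rightarrow> cstate \<Rightarrow> cstate" where
  "local_upd T i st = (let m = length (cs st); c = cu st ! i + 1 in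
     if real c \<ge> 1 + sqrt (real T / real m * real (su st ! i))
     then st\<lparr>tu := (tu st)[i := tu st ! i + 1], cu := (cu st)[i := 0],
             su := (su st)[i := su st ! i + c]\<rparr>
     else st\<lparr>cu := (cu st)[i := c]\<rparr>)"

definition global_upd :: "nat \<Rightarrow> cstate \<Rightarrow> cstate" where
  "global_upd T st = (let c = cf st + 1 in
     if real c \<ge> 1 + sqrt (real T * real (sf st))
     then st\<lparr>tf := tf st + 1, cf := 0, sf := sf st + c\<rparr>
     else st\<lparr>cf := c\<rparr>)"

definition step :: "nat \<Rightarrow> real \<Rightarrow> nat \<Rightarrow> (nat \<Rightarrow> real) \<Rightarrow> bool \<Rightarrow> cstate \<Rightarrow> cstate" where
  "step d \<epsilon> T x ask st = (
     let st1 = (if is_new d \<epsilon> (cs st) x then add_center x st else st);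
         i = (if is_new d \<epsilon> (cs st) x then length (cs st) else nearest d (cs st) x);
         st2 = (if ask then local_upd T i st1 else st1)
     in global_upd T st2)"

text \<open>xs t = query arriving at round t+1; ask t = whether the LLM is queried at that round.\<close>
fun run :: "nat \<Rightarrow> real \<Rightarrow> nat \<Rightarrow> (nat \<Rightarrow> nat \<Rightarrow> real) \<Rightarrow> (nat \<Rightarrow> bool) \<Rightarrow> nat \<Rightarrow> cstate" where
  "run d \<epsilon> T xs ask 0 = init_state"
| "run d \<epsilon> T xs ask (Suc t) = step d \<epsilon> T (xs t) (ask t) (run d \<epsilon> T xs ask t)"

definition local_stages :: "nat \<Rightarrow> real \<Rightarrow> nat \<Rightarrow> (nat \<Rightarrow> nat \<Rightarrow> real) \<Rightarrow> (nat \<Rightarrow> bool) \<Rightarrow> nat" where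
  "local_stages d \<epsilon> T xs ask = (let st = run d \<epsilon> T xs ask T in (\<Sum>i<length (cs st). tu st ! i))"

definition global_stage :: "nat \<Rightarrow> real \<Rightarrow> nat \<Rightarrow> (nat \<Rightarrow> nat \<Rightarrow> real) \<Rightarrow> (nat \<Rightarrow> bool) \<Rightarrow> nat" where
  "global_stage d \<epsilon> T xs ask = tf (run d \<epsilon> T xs ask T)"

end

theory Submission
  imports Defs
begin

text \<open>The bound holds pathwise, for every query sequence and every pattern of LLM calls, so the
  expectations are bounded trivially. Every stage counter, local or global, obeys the rule that a
  stage closes after \<open>n \<ge> 1 + sqrt (r S)\<close> further counted rounds, where \<open>S\<close> counts the rounds of
  all earlier stages and \<open>r \<ge> R\<close>, with \<open>R = T\<close> for the global counter and \<open>R = T / m_max\<close> for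
  the local ones (the centers are \<open>\<epsilon>\<close>-separated, so \<open>m_t \<le> m_max\<close>). Each closed stage raises the
  potential \<open>- log\<^sub>2 ln (R / S) + 4 sqrt (S / R)\<close> by at least one: while \<open>16 S < R\<close> the new \<open>S\<close> is
  at least \<open>sqrt (R S)\<close>, which halves \<open>ln (R / S)\<close>; afterwards \<open>sqrt (S / R)\<close> grows by \<open>1/4\<close>. The
  potential starts at about \<open>- log\<^sub>2 ln R\<close> and is at most \<open>4 sqrt (S / R)\<close>, so a counter has at
  most \<open>4 sqrt (S / R) + log\<^sub>2 ln R + 2\<close> stages; summing over at most \<open>m_max\<close> centers, whose
  \<open>S\<close> add up to at most \<open>T\<close>, gives \<open>O (m_max log log T)\<close>.\<close>

section \<open>Packing bound for separated query sets\<close>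

lemma edist_commute: "edist d x y = edist d y x"
  by (simp add: edist_def power2_commute)

lemma edist_self [simp]: "edist d x x = 0"
  by (simp add: edist_def)

lemma edist_triangle: "edist d x z \<le> edist d x y + edist d y z"
proof -
  have "edist d x z = L2_set (\<lambda>i. (x i - y i) + (y i - z i)) {..<d}"
    by (simp add: edist_def L2_set_def)
  also have "\<dots> \<le> L2_set (\<lambda>i. x i - y i) {..<d} + L2_set (\<lambda>i. y i - z i) {..<d}"
    by (rule L2_set_triangle_ineq)
  finally show ?thesis
    by (simp add: edist_def L2_set_def)
qed

lemma open_edist_ball: "open {y. edist d x y < r}"
  unfolding edist_def by (intro open_Collect_less continuous_intros) auto

definition separated :: "nat \<Rightarrow> real \<Rightarrow> (nat \<Rightarrow> real) set \<Rightarrow> bool" where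
  "separated d \<epsilon> S \<longleftrightarrow> (\<forall>x\<in>S. \<forall>y\<in>S. x \<noteq> y \<longrightarrow> \<epsilon> < edist d x y)"

lemma bounded_card_separated:
  assumes "compact X" "0 < \<epsilon>"
  obtains B where "\<And>S. finite S \<Longrightarrow> S \<subseteq> X \<Longrightarrow> separated d \<epsilon> S \<Longrightarrow> card S \<le> B"
proof -
  have "X \<subseteq> (\<Union>c\<in>X. {y. edist d c y < \<epsilon>/2})"
    using assms(2) by auto
  then obtain F where F: "F \<subseteq> X" "finite F" "X \<subseteq> (\<Union>c\<in>F. {y. edist d c y < \<epsilon>/2})"
    using compactE_image[OF assms(1), of X "\<lambda>c. {y. edist d c y < \<epsilon>/2}"] open_edist_ball
    by metis
  have "card S \<le> card F" if S: "finite S" "S \<subseteq> X" "separated d \<epsilon> S" for S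
  proof -
    obtain f where f: "\<And>s. s \<in> S \<Longrightarrow> f s \<in> F \<and> edist d (f s) s < \<epsilon>/2"
      using S(2) F(3) by (metis (mono_tags, lifting) UN_iff mem_Collect_eq subsetD)
    have "inj_on f S"
    proof (rule inj_onI, rule ccontr)
      fix s t assume st: "s \<in> S" "t \<in> S" "f s = f t" "s \<noteq> t"
      have "edist d s t \<le> edist d s (f s) + edist d (f t) t"
        using edist_triangle[where x = s and y = "f s" and z = t] st(3) by simp
      also have "\<dots> < \<epsilon>"
        using f[OF st(1)] f[OF st(2)] by (simp add: edist_commute)
      finally show False
        using S(3) st unfolding separated_def by force
    qed
    then show ?thesis
      using card_inj_on_le f F(2) by blast
  qed
  then show thesis
    using that by blast
qed

lemma card_le_mmax:
  assumes "compact X" "0 < \<epsilon>" "finite S" "S \<subseteq> X" "separated d \<epsilon> S"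
  shows "card S \<le> mmax d X \<epsilon>"
proof -
  obtain B where "\<And>S. finite S \<Longrightarrow> S \<subseteq> X \<Longrightarrow> separated d \<epsilon> S \<Longrightarrow> card S \<le> B"
    using bounded_card_separated[OF assms(1,2)] by blast
  then have "bdd_above {card S | S. finite S \<and> S \<subseteq> X \<and> separated d \<epsilon> S}"
    by (auto simp: bdd_above_def)
  then show ?thesis
    unfolding mmax_def separated_def[symmetric] by (rule cSup_upper[rotated]) (use assms in auto)
qed

lemma mmax_ge_1:
  assumes "compact X" "0 < \<epsilon>" "X \<noteq> {}"
  shows "1 \<le> mmax d X \<epsilon>"
proof -
  obtain x where "x \<in> X"
    using assms(3) by blast
  then show ?thesis
    using card_le_mmax[OF assms(1,2), of "{x}" d] by (simp add: separated_def)
qed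

section \<open>A potential for the stage rule\<close>

text \<open>Clipping at \<open>ln 4\<close> keeps the logarithm defined; it is inactive when \<open>16 S < R\<close>, the only
  regime in which this term is relied upon to grow.\<close>
definition loglog_potential :: "real \<Rightarrow> real \<Rightarrow> real" where
  "loglog_potential R s = - log 2 (max (ln (R / s)) (ln 4))"

lemma one_le_ln_4: "1 \<le> ln (4::real)"
  using exp_le by (subst ln_ge_iff) auto

lemma loglog_potential_mono:
  assumes "0 < R" "0 < s" "s \<le> s'"
  shows "loglog_potential R s \<le> loglog_potential R s'"
proof -
  have "ln (R / s') \<le> ln (R / s)"
    using assms by (intro ln_mono divide_left_mono) auto
  then have "log 2 (max (ln (R / s')) (ln 4)) \<le> log 2 (max (ln (R / s)) (ln 4))"
    using one_le_ln_4 by (intro log_mono) (auto simp: less_max_iff_disj)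
  then show ?thesis
    by (simp add: loglog_potential_def)
qed

lemma loglog_potential_le: "loglog_potential R s \<le> - log 2 (ln 4)"
  using one_le_ln_4 by (simp add: loglog_potential_def)

lemma loglog_potential_sqrt_step:
  assumes "0 < R" "0 < s" "16 * s < R" "sqrt (R * s) \<le> s'"
  shows "loglog_potential R s + 1 \<le> loglog_potential R s'"
proof -
  have "ln 16 < ln (R / s)"
    using assms(2,3) by (simp add: field_simps)
  moreover have "ln (16::real) = 2 * ln 4"
    using ln_mult[of 4 4] by simp
  ultimately have big: "2 * ln 4 < ln (R / s)"
    by simp
  have root_pos: "0 < sqrt (R * s)"
    using assms(1,2) by simp
  have s'_pos: "0 < s'"
    using root_pos assms(4) by linarith
  have "R / s' \<le> R / sqrt (R * s)"
    using divide_left_mono[OF assms(4), of R] assms(1) mult_pos_pos[OF s'_pos root_pos] by simp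
  also have "\<dots> = sqrt (R / s)"
    using assms(1,2) by (simp add: real_sqrt_mult real_sqrt_divide field_simps)
  finally have "ln (R / s') \<le> ln (R / s) / 2"
    using assms(1,2) s'_pos ln_sqrt[of "R / s"] by (subst (asm) ln_le_cancel_iff[symmetric]) auto
  then have "log 2 (max (ln (R / s')) (ln 4)) \<le> log 2 (ln (R / s) / 2)"
    using big one_le_ln_4 by (intro log_mono) (auto simp: less_max_iff_disj)
  also have "\<dots> = log 2 (max (ln (R / s)) (ln 4)) - 1"
    using big one_le_ln_4 by (simp add: log_divide max_def)
  finally show ?thesis
    by (simp add: loglog_potential_def)
qed

lemma sqrt_ratio_step:
  assumes "0 < R" "0 \<le> s" "R \<le> 16 * s" "s + sqrt (R * s) \<le> s'"
  shows "sqrt (s / R) + 1/4 \<le> sqrt (s' / R)"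
proof -
  have "sqrt R \<le> 4 * sqrt s"
    using real_sqrt_le_mono[OF assms(3)] by (simp add: real_sqrt_mult)
  then have "R / 16 \<le> sqrt R * sqrt s / 4"
    using assms(1) mult_left_mono[of "sqrt R" "4 * sqrt s" "sqrt R"] by simp
  then have "(sqrt s + sqrt R / 4)\<^sup>2 \<le> s + sqrt (R * s)"
    using assms(1,2) by (simp add: power2_eq_square real_sqrt_mult algebra_simps)
  then have "sqrt s + sqrt R / 4 \<le> sqrt s'"
    using assms(4) real_le_rsqrt by force
  then have "(sqrt s + sqrt R / 4) / sqrt R \<le> sqrt s' / sqrt R"
    using assms(1) by (intro divide_right_mono) auto
  then show ?thesis
    using assms(1) by (simp add: real_sqrt_divide add_divide_distrib)
qed

text \<open>\<open>ln (R / 0)\<close> is junk, so the empty history is given the value at \<open>S = 1\<close> lowered by one: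
  the first stage, which makes \<open>S\<close> positive, then also gains one.\<close>
definition stage_potential :: "real \<Rightarrow> nat \<Rightarrow> real" where
  "stage_potential R s =
     (if s = 0 then loglog_potential R 1 - 1 else loglog_potential R s + 4 * sqrt (s / R))"

lemma stage_potential_0: "stage_potential R 0 = - log 2 (max (ln R) (ln 4)) - 1"
  by (simp add: stage_potential_def loglog_potential_def)

lemma stage_potential_le: "stage_potential R s \<le> - log 2 (ln 4) + 4 * sqrt (s / R)"
  using loglog_potential_le[of R 1] loglog_potential_le[of R s] by (simp add: stage_potential_def)

lemma stage_potential_add:
  assumes "0 < R" "1 + sqrt (R * s) \<le> real n"
  shows "stage_potential R s + 1 \<le> stage_potential R (s + n)"
proof (cases "s = 0")
  case True
  then have "1 \<le> real n"
    using assms(2) by simp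
  then have "stage_potential R (s + n) = loglog_potential R n + 4 * sqrt (n / R)"
    using True by (simp add: stage_potential_def)
  moreover have "stage_potential R s = loglog_potential R 1 - 1"
    using True by (simp add: stage_potential_def)
  moreover have "0 \<le> sqrt (n / R)"
    using assms(1) by simp
  ultimately show ?thesis
    using loglog_potential_mono[OF assms(1), of 1 "real n"] \<open>1 \<le> real n\<close> by linarith
next
  case False
  then have s_pos: "0 < real s"
    by simp
  have step: "real s + sqrt (R * s) \<le> real (s + n)"
    using assms(2) by simp
  have potentials: "stage_potential R s = loglog_potential R s + 4 * sqrt (s / R)"
    "stage_potential R (s + n) = loglog_potential R (s + n) + 4 * sqrt ((s + n) / R)"
    using False by (simp_all add: stage_potential_def)
  show ?thesis
  proof (cases "R \<le> 16 * real s")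
    case True
    have "sqrt (s / R) + 1/4 \<le> sqrt ((s + n) / R)"
      using sqrt_ratio_step[OF assms(1) _ True step] by simp
    moreover have "loglog_potential R s \<le> loglog_potential R (s + n)"
      using loglog_potential_mono[OF assms(1) s_pos] by simp
    ultimately show ?thesis
      using potentials by linarith
  next
    case False
    have "sqrt (R * s) \<le> real (s + n)"
      using step by simp
    then have "loglog_potential R s + 1 \<le> loglog_potential R (s + n)"
      using loglog_potential_sqrt_step[OF assms(1) s_pos] False by simp
    moreover have "sqrt (s / R) \<le> sqrt ((s + n) / R)"
      using assms(1) by (intro real_sqrt_le_mono divide_right_mono) auto
    ultimately show ?thesis
      using potentials by linarith
  qed
qed

definition stage_count_inv :: "real \<Rightarrow> nat \<Rightarrow> nat \<Rightarrow> bool" where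
  "stage_count_inv R \<tau> s \<longleftrightarrow> real \<tau> \<le> stage_potential R s - stage_potential R 0 + 1"

lemma stage_count_inv_0 [simp]: "stage_count_inv R \<tau> 0 \<longleftrightarrow> \<tau> \<le> 1"
  by (simp add: stage_count_inv_def)

lemma stage_count_inv_advance:
  assumes "stage_count_inv R \<tau> s" "0 < R" "R \<le> r" "1 + sqrt (r * s) \<le> real n"
  shows "stage_count_inv R (Suc \<tau>) (s + n)"
proof -
  have "sqrt (R * s) \<le> sqrt (r * s)"
    using assms(3) by (intro real_sqrt_le_mono mult_right_mono) auto
  then have "stage_potential R s + 1 \<le> stage_potential R (s + n)"
    using assms(4) by (intro stage_potential_add assms(2)) linarith
  then show ?thesis
    using assms(1) by (simp add: stage_count_inv_def)
qed

lemma stage_count_inv_bound: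
  assumes "stage_count_inv R \<tau> s"
  shows "real \<tau> \<le> 4 * sqrt (s / R) + log 2 (max (ln R) (ln 4)) + 2"
proof -
  have "0 \<le> log 2 (ln 4)"
    using one_le_ln_4 by simp
  then show ?thesis
    using assms stage_potential_le[of R s] unfolding stage_count_inv_def stage_potential_0
    by linarith
qed

lemma one_le_ln_ln:
  assumes "27 \<le> T"
  shows "1 \<le> ln (ln (T::real))"
proof -
  have "1 \<le> ln (3::real)"
    using exp_le by (subst ln_ge_iff) auto
  moreover have "ln (27::real) = 3 * ln 3"
    using ln_realpow[of 3 3] by simp
  moreover have "ln 27 \<le> ln T"
    using assms by simp
  ultimately have "exp 1 \<le> ln T"
    using exp_le by linarith
  then show ?thesis
    using assms by (subst ln_ge_iff) auto
qed

lemma log_ln_le_ln_ln: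
  assumes "0 < R" "R \<le> T" "27 \<le> T"
  shows "log 2 (max (ln R) (ln 4)) \<le> 3/2 * ln (ln (T::real))"
proof -
  have "max (ln R) (ln 4) \<le> ln T"
    using assms by auto
  then have "log 2 (max (ln R) (ln 4)) \<le> log 2 (ln T)"
    using one_le_ln_4 by (intro log_mono) (auto simp: less_max_iff_disj)
  also have "\<dots> = ln (ln T) / ln 2"
    by (simp add: log_def)
  also have "\<dots> \<le> ln (ln T) / (2/3)"
    using one_le_ln_ln[OF assms(3)] ln2_ge_two_thirds by (intro divide_left_mono) auto
  finally show ?thesis
    by simp
qed

lemma stage_count_le_ln_ln:
  assumes "stage_count_inv R \<tau> s" "0 < R" "R \<le> T" "27 \<le> T"
  shows "real \<tau> \<le> 4 * sqrt (s / R) + 3/2 * ln (ln (T::real)) + 2"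
  using stage_count_inv_bound[OF assms(1)] log_ln_le_ln_ln[OF assms(2-4)] by linarith

section \<open>Invariants of the algorithm\<close>

definition assign_center :: "nat \<Rightarrow> real \<Rightarrow> (nat \<Rightarrow> real) \<Rightarrow> cstate \<Rightarrow> cstate" where
  "assign_center d \<epsilon> x st = (if is_new d \<epsilon> (cs st) x then add_center x st else st)"

definition center_index :: "nat \<Rightarrow> real \<Rightarrow> (nat \<Rightarrow> real) list \<Rightarrow> (nat \<Rightarrow> real) \<Rightarrow> nat" where
  "center_index d \<epsilon> C x = (if is_new d \<epsilon> C x then length C else nearest d C x)"

lemma step_eq:
  "step d \<epsilon> T x ask st =
     global_upd T (if ask then local_upd T (center_index d \<epsilon> (cs st) x) (assign_center d \<epsilon> x st)
                   else assign_center d \<epsilon> x st)"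
  by (simp add: step_def assign_center_def center_index_def Let_def)

lemma nearest_less_length:
  assumes "C \<noteq> []"
  shows "nearest d C x < length C"
proof -
  let ?dist = "\<lambda>j. edist d x (C ! j)"
  have "Min (?dist ` {..<length C}) \<in> ?dist ` {..<length C}"
    using assms by (intro Min_in) auto
  then obtain i where "i < length C" "?dist i = Min (?dist ` {..<length C})"
    by auto
  then have "i < length C \<and> (\<forall>j<length C. ?dist i \<le> ?dist j)"
    by simp
  then show ?thesis
    unfolding nearest_def by (rule LeastI2) auto
qed

lemma center_index_less_length: "center_index d \<epsilon> (cs st) x < length (cs (assign_center d \<epsilon> x st))"
proof (cases "is_new d \<epsilon> (cs st) x")
  case True
  then show ?thesis
    by (simp add: center_index_def assign_center_def add_center_def)
next
  case False
  then have "cs st \<noteq> []"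
    by (auto simp: is_new_def)
  then show ?thesis
    using False by (simp add: center_index_def assign_center_def nearest_less_length)
qed

lemma global_upd_local_fields [simp]:
  "cs (global_upd T st) = cs st" "tu (global_upd T st) = tu st"
  "cu (global_upd T st) = cu st" "su (global_upd T st) = su st"
  by (simp_all add: global_upd_def Let_def)

lemma local_upd_global_fields [simp]:
  "tf (local_upd T i st) = tf st" "cf (local_upd T i st) = cf st" "sf (local_upd T i st) = sf st"
  "cs (local_upd T i st) = cs st"
  by (simp_all add: local_upd_def Let_def)

lemma assign_center_global_fields [simp]:
  "tf (assign_center d \<epsilon> x st) = tf st" "cf (assign_center d \<epsilon> x st) = cf st"
  "sf (assign_center d \<epsilon> x st) = sf st"
  by (simp_all add: assign_center_def add_center_def)

definition global_inv :: "nat \<Rightarrow> nat \<Rightarrow> cstate \<Rightarrow> bool" where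
  "global_inv T t st \<longleftrightarrow> stage_count_inv (real T) (tf st) (sf st) \<and> sf st + cf st = t"

lemma global_inv_init: "global_inv T 0 init_state"
  by (simp add: global_inv_def init_state_def)

lemma global_inv_global_upd:
  assumes "0 < T" "global_inv T t st"
  shows "global_inv T (Suc t) (global_upd T st)"
proof (cases "1 + sqrt (real T * real (sf st)) \<le> real (cf st + 1)")
  case True
  then have "stage_count_inv (real T) (Suc (tf st)) (sf st + (cf st + 1))"
    using assms by (intro stage_count_inv_advance[where r = "real T"]) (auto simp: global_inv_def)
  then show ?thesis
    using True assms(2) by (simp add: global_upd_def global_inv_def)
next
  case False
  then show ?thesis
    using assms(2) by (simp add: global_upd_def global_inv_def)
qed

lemma global_inv_step:
  assumes "0 < T" "global_inv T t st"
  shows "global_inv T (Suc t) (step d \<epsilon> T x ask st)"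
  unfolding step_eq using assms by (intro global_inv_global_upd) (auto simp: global_inv_def)

lemma global_stage_le_ln_ln:
  assumes "global_inv T T st" "27 \<le> T"
  shows "real (tf st) \<le> 8 * ln (ln (real T))"
proof -
  have "real (tf st) \<le> 4 * sqrt (sf st / real T) + 3/2 * ln (ln (real T)) + 2"
    using assms by (intro stage_count_le_ln_ln) (auto simp: global_inv_def)
  moreover have "sqrt (sf st / real T) \<le> 1"
    using assms by (auto simp: global_inv_def)
  moreover have "1 \<le> ln (ln (real T))"
    using one_le_ln_ln assms(2) by simp
  ultimately show ?thesis
    by linarith
qed

locale query_run =
  fixes d :: nat and \<epsilon> :: real and X :: "(nat \<Rightarrow> real) set" and T :: nat
  assumes compact_X: "compact X" and eps_pos: "0 < \<epsilon>" and X_nonempty: "X \<noteq> {}"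
    and T_pos: "0 < T"
begin

definition R :: real where
  "R = real T / real (mmax d X \<epsilon>)"

lemma mmax_pos: "1 \<le> mmax d X \<epsilon>"
  using mmax_ge_1[OF compact_X eps_pos X_nonempty] .

lemma R_pos: "0 < R"
  using mmax_pos T_pos by (simp add: R_def)

lemma R_le_T: "R \<le> real T"
  using mmax_pos by (simp add: R_def divide_le_eq mult_le_cancel_left1)

definition local_inv :: "nat \<Rightarrow> cstate \<Rightarrow> bool" where
  "local_inv t st \<longleftrightarrow>
     length (tu st) = length (cs st) \<and> length (cu st) = length (cs st) \<and>
     length (su st) = length (cs st) \<and>
     set (cs st) \<subseteq> X \<and> distinct (cs st) \<and> separated d \<epsilon> (set (cs st)) \<and>
     (\<forall>i<length (cs st). stage_count_inv R (tu st ! i) (su st ! i)) \<and>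
     sum_list (su st) + sum_list (cu st) \<le> t"

lemma local_inv_init: "local_inv 0 init_state"
  by (simp add: local_inv_def init_state_def separated_def)

lemma local_inv_mono: "local_inv t st \<Longrightarrow> t \<le> t' \<Longrightarrow> local_inv t' st"
  by (auto simp: local_inv_def)

lemma local_inv_global_upd [simp]: "local_inv t (global_upd T' st) = local_inv t st"
  by (simp add: local_inv_def)

lemma length_centers_le_mmax:
  assumes "local_inv t st"
  shows "length (cs st) \<le> mmax d X \<epsilon>"
  using assms card_le_mmax[OF compact_X eps_pos, of "set (cs st)" d]
  by (simp add: local_inv_def distinct_card)

lemma local_inv_assign_center:
  assumes "local_inv t st" "x \<in> X"
  shows "local_inv t (assign_center d \<epsilon> x st)"
proof (cases "is_new d \<epsilon> (cs st) x")
  case True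
  then have "x \<notin> set (cs st)"
    using eps_pos by (force simp: is_new_def)
  moreover have "separated d \<epsilon> (insert x (set (cs st)))"
    using assms(1) True by (auto simp: local_inv_def separated_def is_new_def edist_commute)
  ultimately show ?thesis
    using assms True
    by (auto simp: local_inv_def assign_center_def add_center_def nth_append less_Suc_eq)
next
  case False
  then show ?thesis
    using assms(1) by (simp add: assign_center_def)
qed

lemma local_inv_local_upd:
  assumes inv: "local_inv t st" and i: "i < length (cs st)"
  shows "local_inv (Suc t) (local_upd T i st)"
proof -
  let ?m = "length (cs st)" and ?c = "cu st ! i + 1"
  have len: "length (tu st) = ?m" "length (cu st) = ?m" "length (su st) = ?m"
    using inv by (auto simp: local_inv_def)
  have "0 < real (mmax d X \<epsilon>) * real ?m"
    using mmax_pos i by (auto simp: zero_less_mult_iff)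
  then have R_le: "R \<le> real T / real ?m"
    using length_centers_le_mmax[OF inv] unfolding R_def by (intro divide_left_mono) auto
  have "cu st ! i \<le> sum_list (cu st)"
    using i len by (intro elem_le_sum_list) simp
  then have queries: "sum_list ((su st)[i := su st ! i + ?c]) + sum_list ((cu st)[i := 0])
      = Suc (sum_list (su st) + sum_list (cu st))"
    "sum_list ((cu st)[i := ?c]) = Suc (sum_list (cu st))"
    using i len by (simp_all add: sum_list_update)
  show ?thesis
  proof (cases "1 + sqrt (real T / real ?m * real (su st ! i)) \<le> real ?c")
    case True
    then have "stage_count_inv R (Suc (tu st ! i)) (su st ! i + ?c)"
      using inv i R_pos R_le
      by (intro stage_count_inv_advance[where r = "real T / real ?m"]) (auto simp: local_inv_def)
    then show ?thesis
      using True inv i len queries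
      by (auto simp: local_upd_def local_inv_def nth_list_update simp del: of_nat_Suc)
  next
    case False
    then show ?thesis
      using inv i len queries by (auto simp: local_upd_def local_inv_def simp del: of_nat_Suc)
  qed
qed

lemma local_inv_step:
  assumes "local_inv t st" "x \<in> X"
  shows "local_inv (Suc t) (step d \<epsilon> T x ask st)"
  using local_inv_assign_center[OF assms] local_inv_local_upd center_index_less_length
    local_inv_mono[of t _ "Suc t"]
  unfolding step_eq by auto

lemma run_invariants:
  assumes "\<forall>t<T. xs t \<in> X" "t \<le> T"
  shows "local_inv t (run d \<epsilon> T xs ask t) \<and> global_inv T t (run d \<epsilon> T xs ask t)"
  using assms(2)
proof (induction t)
  case 0
  show ?case
    by (simp add: local_inv_init global_inv_init)
next
  case (Suc t)
  then show ?case
    using assms(1) local_inv_step global_inv_step T_pos by simp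
qed

lemma local_stages_le_ln_ln:
  assumes "local_inv T st" "27 \<le> T"
  shows "real (\<Sum>i<length (cs st). tu st ! i) \<le> 8 * real (mmax d X \<epsilon>) * ln (ln (real T))"
proof -
  let ?L = "ln (ln (real T))" and ?m = "real (mmax d X \<epsilon>)" and ?n = "length (cs st)"
  have L: "1 \<le> ?L"
    using one_le_ln_ln assms(2) by simp
  have each: "real (tu st ! i) \<le> 2 * (su st ! i / R) + (3/2 * ?L + 4)" if "i < ?n" for i
  proof -
    define q where "q = su st ! i / R"
    have "real (tu st ! i) \<le> 4 * sqrt q + 3/2 * ?L + 2"
      unfolding q_def using assms that R_pos R_le_T
      by (intro stage_count_le_ln_ln) (auto simp: local_inv_def)
    moreover have "2 * sqrt q \<le> q + 1"
      using arith_geo_mean_sqrt[of q 1] R_pos by (simp add: q_def)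
    ultimately show ?thesis
      unfolding q_def[symmetric] by linarith
  qed
  have "real (\<Sum>i<?n. tu st ! i) \<le> (\<Sum>i<?n. 2 * (su st ! i / R) + (3/2 * ?L + 4))"
    unfolding of_nat_sum using each by (intro sum_mono) auto
  also have "\<dots> = 2 / R * real (sum_list (su st)) + real ?n * (3/2 * ?L + 4)"
    using assms(1)
    by (simp add: local_inv_def sum.distrib sum_distrib_left sum_list_sum_nth atLeast0LessThan
        sum_divide_distrib)
  also have "\<dots> \<le> 2 / R * real T + ?m * (3/2 * ?L + 4)"
    using assms(1) length_centers_le_mmax[OF assms(1)] R_pos L
    by (intro add_mono mult_left_mono mult_right_mono) (auto simp: local_inv_def)
  also have "\<dots> = ?m * (3/2 * ?L + 6)"
    using T_pos mmax_pos by (simp add: R_def field_simps)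
  also have "\<dots> \<le> ?m * (8 * ?L)"
    using L by (intro mult_left_mono) auto
  finally show ?thesis
    by (simp add: mult.left_commute)
qed

end

text \<open>No integrability is needed: a non-integrable function has integral \<open>0 \<le> c\<close>.\<close>
lemma integral_le_nonneg_const:
  fixes f :: "'a \<Rightarrow> real"
  assumes "prob_space M" "\<forall>x\<in>space M. f x \<le> c" "0 \<le> c"
  shows "(\<integral>x. f x \<partial>M) \<le> c"
proof (cases "integrable M f")
  case True
  then show ?thesis
    using prob_space.integral_le_const[OF assms(1) True] assms(2) by (simp add: AE_I2)
next
  case False
  then show ?thesis
    using assms(3) by (simp add: not_integrable_integral_eq)
qed

theorem mainTheorem7:
  shows "\<exists>C T0. \<forall>(M :: ((nat \<Rightarrow> nat \<Rightarrow> real) \<times> (nat \<Rightarrow> bool)) measure)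
      (d :: nat) (X :: (nat \<Rightarrow> real) set) (\<epsilon> :: real) (T :: nat).
      prob_space M \<and> compact X \<and> X \<noteq> {} \<and> X \<subseteq> {x. \<forall>i\<ge>d. x i = 0} \<and> \<epsilon> > 0 \<and> T \<ge> T0 \<and>
      (\<forall>\<omega>\<in>space M. \<forall>t<T. fst \<omega> t \<in> X)
      \<longrightarrow> (\<integral>\<omega>. real (local_stages d \<epsilon> T (fst \<omega>) (snd \<omega>)) \<partial>M)
              \<le> C * real (mmax d X \<epsilon>) * ln (ln (real T))
        \<and> (\<integral>\<omega>. real (global_stage d \<epsilon> T (fst \<omega>) (snd \<omega>)) \<partial>M) \<le> C * ln (ln (real T))"
proof (intro exI[of _ "8::real"] exI[of _ "27::nat"] allI impI)
  fix M :: "((nat \<Rightarrow> nat \<Rightarrow> real) \<times> (nat \<Rightarrow> bool)) measure"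
    and d :: nat and X :: "(nat \<Rightarrow> real) set" and \<epsilon> :: real and T :: nat
  assume "prob_space M \<and> compact X \<and> X \<noteq> {} \<and> X \<subseteq> {x. \<forall>i\<ge>d. x i = 0} \<and> \<epsilon> > 0 \<and> T \<ge> 27 \<and>
    (\<forall>\<omega>\<in>space M. \<forall>t<T. fst \<omega> t \<in> X)"
  then have M: "prob_space M" and T: "27 \<le> T" and queries: "\<forall>\<omega>\<in>space M. \<forall>t<T. fst \<omega> t \<in> X"
    and "compact X" "X \<noteq> {}" "0 < \<epsilon>"
    by auto
  then interpret query_run d \<epsilon> X T
    by unfold_locales auto
  have "real (local_stages d \<epsilon> T (fst \<omega>) (snd \<omega>)) \<le> 8 * real (mmax d X \<epsilon>) * ln (ln (real T))"
    "real (global_stage d \<epsilon> T (fst \<omega>) (snd \<omega>)) \<le> 8 * ln (ln (real T))" if "\<omega> \<in> space M" for \<omega>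
    using run_invariants[of "fst \<omega>" T "snd \<omega>"] queries that local_stages_le_ln_ln global_stage_le_ln_ln T
    by (simp_all add: local_stages_def global_stage_def Let_def)
  moreover have "1 \<le> ln (ln (real T))"
    by (rule one_le_ln_ln) (use T in simp)
  then have "0 \<le> ln (ln (real T))"
    by linarith
  ultimately show "(\<integral>\<omega>. real (local_stages d \<epsilon> T (fst \<omega>) (snd \<omega>)) \<partial>M)
      \<le> 8 * real (mmax d X \<epsilon>) * ln (ln (real T))
    \<and> (\<integral>\<omega>. real (global_stage d \<epsilon> T (fst \<omega>) (snd \<omega>)) \<partial>M) \<le> 8 * ln (ln (real T))"
    by (intro conjI integral_le_nonneg_const[OF M] ballI) auto
qed

end
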